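(* Let $(X,d_X)$ be a complete metric space. Suppose that $U$ is a process on $X$ with pullback attractor $\mathfrak{A}=\{A(t)\}_{t\in\mathbb{R}}$ and that $S$ is a semigroup on $X$ with global attractor $\mathcal{A}$. Assume that (i) $\mathfrak{A}$ is forward bounded, i.e. there is a bounded set $B\subset X$ such that $\bigcup_{t\geq 0}A(t)\subset B$; (ii) for every $T>0$, $$\lim_{t\to\infty}\sup_{x\in B} d_X\big(U(t+T,t,x),S(T,x)\big)=0.$$ Then $\lim_{t\to\infty}\operatorname{dist}\big(A(t),\mathcal{A}\big)=0$.
   Context: A process on $X$ is a map $U:\{(t,\tau)\in\mathbb{R}^2:t\geq\tau\}\times X\to X$ with $U(\tau,\tau,x)=x$ and $U(t,s,U(s,\tau,x))=U(t,\tau,x)$ for all $t\geq s\geq\tau$, $x\in X$ (no continuity is assumed). A pullback attractor of $U$ is a family $\mathfrak{A}=\{A(t)\}_{t\in\mathbb{R}}$ of nonempty compact subsets of $X$ which is invariant ($U(t,\tau,A(\tau))=A(t)$ for all $t\geq\tau$), pullback attracts every nonempty bounded set $D\subset X$ (i.e. $\lim_{s\to\infty}\operatorname{dist}(U(t,t-s,D),A(t))=0$ for every $t\in\mathbb{R}$), and is minimal among families with these properties. A semigroup on $X$ is a map $S:[0,\infty)\times X\to X$ with $S(0,x)=x$ and $S(t+s,x)=S(t,S(s,x))$; its global attractor $\mathcal{A}$ is a nonempty compact set with $S(t,\mathcal{A})=\mathcal{A}$ for all $t\geq0$ that attracts every bounded set $D$: $\lim_{t\to\infty}\operatorname{dist}(S(t,D),\mathcal{A})=0$.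 Here $\operatorname{dist}(A,B)=\sup_{a\in A}\inf_{b\in B}d_X(a,b)$ is the Hausdorff semi-metric. *)

theory Defs
  imports "HOL-Analysis.Analysis" "HOL-Library.Extended_Real"
begin

text \<open>Hausdorff semi-distance dist(A,B) = sup over a in A of inf over b in B of d(a,b),
  valued in the extended reals so that unbounded suprema are represented faithfully.\<close>
definition hsemidist :: "'a::metric_space set \<Rightarrow> 'a set \<Rightarrow> ereal" where
  "hsemidist A B = (SUP a\<in>A. ereal (infdist a B))"

definition is_process :: "(real \<Rightarrow> real \<Rightarrow> 'a \<Rightarrow> 'a) \<Rightarrow> bool" where
  "is_process U \<longleftrightarrow>
     (\<forall>\<tau> x. U \<tau> \<tau> x = x) \<and>
     (\<forall>t s \<tau> x. t \<ge> s \<and> s \<ge> \<tau> \<longrightarrow> U t s (U s \<tau> x) = U t \<tau> x)"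

definition is_semigroup :: "(real \<Rightarrow> 'a \<Rightarrow> 'a) \<Rightarrow> bool" where
  "is_semigroup S \<longleftrightarrow>
     (\<forall>x. S 0 x = x) \<and>
     (\<forall>t s x. t \<ge> 0 \<and> s \<ge> 0 \<longrightarrow> S (t + s) x = S t (S s x))"

definition pullback_attracts_bdd ::
  "(real \<Rightarrow> real \<Rightarrow> 'a::metric_space \<Rightarrow> 'a) \<Rightarrow> (real \<Rightarrow> 'a set) \<Rightarrow> bool" where
  "pullback_attracts_bdd U A \<longleftrightarrow>
     (\<forall>D t. D \<noteq> {} \<and> bounded D \<longrightarrow>
        ((\<lambda>s. hsemidist (U t (t - s) ` D) (A t)) \<longlongrightarrow> 0) at_top)"

definition pb_attractor_candidate ::
  "(real \<Rightarrow> real \<Rightarrow> 'a::metric_space \<Rightarrow> 'a) \<Rightarrow> (real \<Rightarrow> 'a set) \<Rightarrow> bool" where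
  "pb_attractor_candidate U A \<longleftrightarrow>
     (\<forall>t. A t \<noteq> {} \<and> compact (A t)) \<and>
     (\<forall>t \<tau>. t \<ge> \<tau> \<longrightarrow> U t \<tau> ` A \<tau> = A t) \<and>
     pullback_attracts_bdd U A"

definition is_pullback_attractor ::
  "(real \<Rightarrow> real \<Rightarrow> 'a::metric_space \<Rightarrow> 'a) \<Rightarrow> (real \<Rightarrow> 'a set) \<Rightarrow> bool" where
  "is_pullback_attractor U A \<longleftrightarrow>
     pb_attractor_candidate U A \<and>
     (\<forall>C. pb_attractor_candidate U C \<longrightarrow> (\<forall>t. A t \<subseteq> C t))"

definition is_global_attractor ::
  "(real \<Rightarrow> 'a::metric_space \<Rightarrow> 'a) \<Rightarrow> 'a set \<Rightarrow> bool" where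
  "is_global_attractor S GA \<longleftrightarrow>
     GA \<noteq> {} \<and> compact GA \<and>
     (\<forall>t\<ge>0. S t ` GA = GA) \<and>
     (\<forall>D. D \<noteq> {} \<and> bounded D \<longrightarrow>
        ((\<lambda>t. hsemidist (S t ` D) GA) \<longlongrightarrow> 0) at_top)"

end

theory Submission
  imports Defs
begin

text \<open>Fix \<open>\<epsilon> > 0\<close>. Since \<open>\<A>\<close> attracts the bounded set \<open>B\<close>, some \<open>T > 0\<close> has
  \<open>dist(S(T,B), \<A>) < \<epsilon>/2\<close>. By invariance and forward boundedness, for \<open>s \<ge> 0\<close> the section
  \<open>A(s+T) = U(s+T,s,A(s))\<close> lies in \<open>U(s+T,s,B)\<close>, which for large \<open>s\<close> is uniformly
  \<open>\<epsilon>/2\<close>-close to \<open>S(T,B)\<close>; the triangle inequality gives \<open>dist(A(s+T), \<A>) < \<epsilon>\<close>.\<close>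

lemma ereal_tendsto_zeroI:
  fixes f :: "'b \<Rightarrow> ereal"
  assumes "\<forall>\<^sub>F x in F. 0 \<le> f x"
    and "\<And>e. e > 0 \<Longrightarrow> \<forall>\<^sub>F x in F. f x \<le> ereal e"
  shows "(f \<longlongrightarrow> 0) F"
proof (rule order_tendstoI)
  fix a :: ereal assume "a < 0"
  with assms(1) show "\<forall>\<^sub>F x in F. a < f x"
    by (auto elim: eventually_mono)
next
  fix u :: ereal assume "0 < u"
  then obtain e :: real where "0 < e" "ereal e < u"
    by (metis ereal_dense2 ereal_less(2) order.strict_trans)
  with assms(2)[of e] show "\<forall>\<^sub>F x in F. f x < u"
    by (auto elim: eventually_mono)
qed

lemma infdist_le_hsemidist: "a \<in> A \<Longrightarrow> ereal (infdist a C) \<le> hsemidist A C"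
  unfolding hsemidist_def by (rule SUP_upper)

lemma hsemidist_nonneg:
  assumes "A \<noteq> {}"
  shows "0 \<le> hsemidist A C"
proof -
  obtain a where "a \<in> A"
    using assms by blast
  have "0 \<le> ereal (infdist a C)"
    by (simp add: infdist_nonneg)
  also have "\<dots> \<le> hsemidist A C"
    using \<open>a \<in> A\<close> by (rule infdist_le_hsemidist)
  finally show ?thesis .
qed

lemma hsemidist_mono: "A \<subseteq> A' \<Longrightarrow> hsemidist A C \<le> hsemidist A' C"
  unfolding hsemidist_def by (rule SUP_subset_mono) auto

lemma hsemidist_image_le_perturbation:
  "hsemidist (f ` D) C \<le> (SUP x\<in>D. ereal (dist (f x) (g x))) + hsemidist (g ` D) C"
  unfolding hsemidist_def image_image
proof (rule SUP_least)
  fix x assume "x \<in> D"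
  have "ereal (infdist (f x) C) \<le> ereal (dist (f x) (g x)) + ereal (infdist (g x) C)"
    using infdist_triangle[of "f x" C "g x"] by (simp add: add.commute)
  also have "\<dots> \<le> (SUP x\<in>D. ereal (dist (f x) (g x))) + (SUP x\<in>D. ereal (infdist (g x) C))"
    using \<open>x \<in> D\<close> by (intro add_mono SUP_upper)
  finally show "ereal (infdist (f x) C) \<le> \<dots>" .
qed

lemma pullback_attractor_nonempty: "is_pullback_attractor U A \<Longrightarrow> A t \<noteq> {}"
  unfolding is_pullback_attractor_def pb_attractor_candidate_def by blast

lemma pullback_attractor_invariant:
  "is_pullback_attractor U A \<Longrightarrow> \<tau> \<le> t \<Longrightarrow> U t \<tau> ` A \<tau> = A t"
  unfolding is_pullback_attractor_def pb_attractor_candidate_def by blast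

lemma global_attractor_attracts:
  "is_global_attractor S GA \<Longrightarrow> D \<noteq> {} \<Longrightarrow> bounded D \<Longrightarrow>
    ((\<lambda>t. hsemidist (S t ` D) GA) \<longlongrightarrow> 0) at_top"
  unfolding is_global_attractor_def by blast

lemma forward_bounded_section_le:
  assumes "is_pullback_attractor U A" and "(\<Union>t\<in>{0..}. A t) \<subseteq> B"
    and "0 \<le> s" and "0 \<le> T"
  shows "hsemidist (A (s + T)) C
      \<le> (SUP x\<in>B. ereal (dist (U (s + T) s x) (S T x))) + hsemidist (S T ` B) C"
proof -
  have "A (s + T) = U (s + T) s ` A s"
    using pullback_attractor_invariant[OF assms(1)] \<open>0 \<le> T\<close> by simp
  also have "\<dots> \<subseteq> U (s + T) s ` B"
    using assms(2,3) by auto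
  finally have "hsemidist (A (s + T)) C \<le> hsemidist (U (s + T) s ` B) C"
    by (rule hsemidist_mono)
  also have "\<dots> \<le> (SUP x\<in>B. ereal (dist (U (s + T) s x) (S T x))) + hsemidist (S T ` B) C"
    by (rule hsemidist_image_le_perturbation)
  finally show ?thesis .
qed

theorem theorem2p2:
  fixes U :: "real \<Rightarrow> real \<Rightarrow> 'a::complete_space \<Rightarrow> 'a"
    and S :: "real \<Rightarrow> 'a \<Rightarrow> 'a"
    and A :: "real \<Rightarrow> 'a set"
    and GA :: "'a set"
    and B :: "'a set"
  assumes "is_process U"
    and "is_pullback_attractor U A"
    and "is_semigroup S"
    and "is_global_attractor S GA"
    and "bounded B"
    and "(\<Union>t\<in>{0..}. A t) \<subseteq> B"
    and "\<And>T. T > 0 \<Longrightarrow>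
           ((\<lambda>t. SUP x\<in>B. ereal (dist (U (t + T) t x) (S T x))) \<longlongrightarrow> 0) at_top"
  shows "((\<lambda>t. hsemidist (A t) GA) \<longlongrightarrow> 0) at_top"
proof (rule ereal_tendsto_zeroI)
  show "\<forall>\<^sub>F t in at_top. 0 \<le> hsemidist (A t) GA"
    using pullback_attractor_nonempty[OF assms(2)] by (simp add: hsemidist_nonneg)
  fix e :: real assume "e > 0"
  have "B \<noteq> {}"
    using pullback_attractor_nonempty[OF assms(2), of 0] assms(6) by auto
  have "\<forall>\<^sub>F T in at_top. hsemidist (S T ` B) GA < ereal (e/2) \<and> T > 0"
    using global_attractor_attracts[OF assms(4) \<open>B \<noteq> {}\<close> assms(5)] \<open>e > 0\<close>
    by (intro eventually_conj order_tendstoD eventually_gt_at_top) auto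
  then obtain T where "T > 0" and T: "hsemidist (S T ` B) GA < ereal (e/2)"
    using eventually_happens'[OF trivial_limit_at_top_linorder] by blast
  have "\<forall>\<^sub>F s in at_top. (SUP x\<in>B. ereal (dist (U (s + T) s x) (S T x))) < ereal (e/2) \<and> s \<ge> 0"
    using assms(7)[OF \<open>T > 0\<close>] \<open>e > 0\<close>
    by (intro eventually_conj order_tendstoD eventually_ge_at_top) auto
  then obtain s0 where s0: "\<And>s. s \<ge> s0 \<Longrightarrow>
      (SUP x\<in>B. ereal (dist (U (s + T) s x) (S T x))) < ereal (e/2) \<and> s \<ge> 0"
    unfolding eventually_at_top_linorder by blast
  show "\<forall>\<^sub>F t in at_top. hsemidist (A t) GA \<le> ereal e"
  proof (rule eventually_at_top_linorderI)
    fix t assume "t \<ge> s0 + T"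
    then have "(SUP x\<in>B. ereal (dist (U t (t - T) x) (S T x))) < ereal (e/2)" "t - T \<ge> 0"
      using s0[of "t - T"] by auto
    moreover have "hsemidist (A t) GA
        \<le> (SUP x\<in>B. ereal (dist (U t (t - T) x) (S T x))) + hsemidist (S T ` B) GA"
      using forward_bounded_section_le[OF assms(2,6) \<open>t - T \<ge> 0\<close>, of T GA S] \<open>T > 0\<close> by simp
    ultimately have "hsemidist (A t) GA < ereal (e/2) + ereal (e/2)"
      using T by (meson ereal_add_strict_mono2 order.strict_trans1)
    then show "hsemidist (A t) GA \<le> ereal e"
      by simp
  qed
qed

end
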